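(* Consider a mean-variance team stochastic game as described in the context, with trade-off parameter $\beta\ge 0$. For any two joint policies $\boldsymbol{\mu},\boldsymbol{\mu}'\in\mathcal{U}$, $$J(\boldsymbol{\mu}')-J(\boldsymbol{\mu})=\mathbb{E}_{s\sim\pi^{\boldsymbol{\mu}'},\,\boldsymbol{a}\sim\boldsymbol{\mu}'(\cdot|s)}\big[A_f^{\boldsymbol{\mu}}(s,\boldsymbol{a})\big]+\beta\big(\eta^{\boldsymbol{\mu}'}-\eta^{\boldsymbol{\mu}}\big)^2 .$$
   Context: A team stochastic game consists of a finite set of agents $\mathcal{N}=\{1,\dots,N\}$, a finite state space $\mathcal{S}$, finite action sets $\mathcal{A}_i$ ($i\in\mathcal{N}$) with joint action set $\mathcal{A}=\prod_{i}\mathcal{A}_i$, a transition kernel $P(s'|s,\boldsymbol{a})$ and a common reward function $r:\mathcal{S}\times\mathcal{A}\to\mathbb{R}$. A stationary policy of agent $i$ is a map $\mu_i:\mathcal{S}\to\Delta(\mathcal{A}_i)$; $\mathcal{U}_i$ is the set of such policies. A joint policy $\boldsymbol{\mu}=(\mu_1,\dots,\mu_N)\in\mathcal{U}=\prod_i\mathcal{U}_i$ chooses $\boldsymbol{a}=(a_1,\dots,a_N)$ in state $s$ with probability $\boldsymbol{\mu}(\boldsymbol{a}|s)=\prod_i\mu_i(a_i|s)$, inducing the Markov chain $P^{\boldsymbol{\mu}}(s'|s)=\sum_{\boldsymbol{a}}\boldsymbol{\mu}(\boldsymbol{a}|s)P(s'|s,\boldsymbol{a})$. Standing assumption: for every $\boldsymbol{\mu}\in\mathcal{U}$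 this chain is ergodic, with stationary distribution $\pi^{\boldsymbol{\mu}}$ (so $\pi^{\boldsymbol{\mu}}(s)>0$ for all $s$). Long-run average reward: $\eta^{\boldsymbol{\mu}}=\sum_s\pi^{\boldsymbol{\mu}}(s)\sum_{\boldsymbol{a}}\boldsymbol{\mu}(\boldsymbol{a}|s)r(s,\boldsymbol{a})$; long-run variance: $\zeta^{\boldsymbol{\mu}}=\sum_s\pi^{\boldsymbol{\mu}}(s)\sum_{\boldsymbol{a}}\boldsymbol{\mu}(\boldsymbol{a}|s)(r(s,\boldsymbol{a})-\eta^{\boldsymbol{\mu}})^2$ (equal to $\lim_{T\to\infty}\frac1T\mathbb{E}_{\boldsymbol{\mu}}\sum_{t<T}(r(s_t,\boldsymbol{a}_t)-\eta^{\boldsymbol{\mu}})^2$). For fixed $\beta\ge0$ the mean-variance performance is $J(\boldsymbol{\mu})=J^{\boldsymbol{\mu}}=\eta^{\boldsymbol{\mu}}-\beta\zeta^{\boldsymbol{\mu}}$. Surrogate reward: $f^{\boldsymbol{\mu}}(s,\boldsymbol{a})=r(s,\boldsymbol{a})-\beta(r(s,\boldsymbol{a})-\eta^{\boldsymbol{\mu}})^2$, $f^{\boldsymbol{\mu}}(s)=\sum_{\boldsymbol{a}}\boldsymbol{\mu}(\boldsymbol{a}|s)f^{\boldsymbol{\mu}}(s,\boldsymbol{a})$. The value function $V_f^{\boldsymbol{\mu}}$ is a solution of the Poisson equation $V(s)=f^{\boldsymbol{\mu}}(s)-J^{\boldsymbol{\mu}}+\sum_{s'}P^{\boldsymbol{\mu}}(s'|s)V(s')$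 for all $s$ (formally $V_f^{\boldsymbol{\mu}}(s)=\mathbb{E}_{\boldsymbol{\mu}}[\sum_{t\ge0}(f^{\boldsymbol{\mu}}(s_t,\boldsymbol{a}_t)-J^{\boldsymbol{\mu}})\mid s_0=s]$; it is unique up to an additive constant, which does not affect $A_f^{\boldsymbol{\mu}}$). Action-value function: $Q_f^{\boldsymbol{\mu}}(s,\boldsymbol{a})=f^{\boldsymbol{\mu}}(s,\boldsymbol{a})-J^{\boldsymbol{\mu}}+\sum_{s'}P(s'|s,\boldsymbol{a})V_f^{\boldsymbol{\mu}}(s')$; advantage function: $A_f^{\boldsymbol{\mu}}(s,\boldsymbol{a})=Q_f^{\boldsymbol{\mu}}(s,\boldsymbol{a})-V_f^{\boldsymbol{\mu}}(s)$. *)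

theory Defs
  imports "HOL-Analysis.Analysis"
begin

(* Team stochastic game.
   's : finite state type, 'i : finite agent type, 'b : type of individual actions.
   P s a s' : transition kernel, r s a : common reward. *)

definition joint_actions :: "('i \<Rightarrow> 'b set) \<Rightarrow> ('i \<Rightarrow> 'b) set" where
  "joint_actions A = PiE UNIV A"

definition valid_game ::
  "('i::finite \<Rightarrow> 'b set) \<Rightarrow> ('s::finite \<Rightarrow> ('i \<Rightarrow> 'b) \<Rightarrow> 's \<Rightarrow> real) \<Rightarrow> bool" where
  "valid_game A P \<longleftrightarrow> (\<forall>i. finite (A i) \<and> A i \<noteq> {}) \<and>
     (\<forall>s. \<forall>a\<in>joint_actions A. (\<forall>s'. P s a s' \<ge> 0) \<and> (\<Sum>s'\<in>UNIV. P s a s') = 1)"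

definition is_policy :: "'b set \<Rightarrow> ('s \<Rightarrow> 'b \<Rightarrow> real) \<Rightarrow> bool" where
  "is_policy Ai m \<longleftrightarrow> (\<forall>s. (\<forall>b. m s b \<ge> 0) \<and> (\<forall>b. b \<notin> Ai \<longrightarrow> m s b = 0)
       \<and> (\<Sum>b\<in>Ai. m s b) = 1)"

definition is_joint_policy :: "('i \<Rightarrow> 'b set) \<Rightarrow> ('i \<Rightarrow> 's \<Rightarrow> 'b \<Rightarrow> real) \<Rightarrow> bool" where
  "is_joint_policy A mu \<longleftrightarrow> (\<forall>i. is_policy (A i) (mu i))"

definition jprob :: "('i::finite \<Rightarrow> 's \<Rightarrow> 'b \<Rightarrow> real) \<Rightarrow> 's \<Rightarrow> ('i \<Rightarrow> 'b) \<Rightarrow> real" where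
  "jprob mu s a = (\<Prod>i\<in>UNIV. mu i s (a i))"

definition Pmu :: "('i::finite \<Rightarrow> 'b set) \<Rightarrow> ('s \<Rightarrow> ('i \<Rightarrow> 'b) \<Rightarrow> 's \<Rightarrow> real)
     \<Rightarrow> ('i \<Rightarrow> 's \<Rightarrow> 'b \<Rightarrow> real) \<Rightarrow> 's \<Rightarrow> 's \<Rightarrow> real" where
  "Pmu A P mu s s' = (\<Sum>a\<in>joint_actions A. jprob mu s a * P s a s')"

fun nstep :: "('s::finite \<Rightarrow> 's \<Rightarrow> real) \<Rightarrow> nat \<Rightarrow> 's \<Rightarrow> 's \<Rightarrow> real" where
  "nstep Q 0 s s' = (if s = s' then 1 else 0)"
| "nstep Q (Suc n) s s' = (\<Sum>t\<in>UNIV. nstep Q n s t * Q t s')"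

definition irreducible_chain :: "('s::finite \<Rightarrow> 's \<Rightarrow> real) \<Rightarrow> bool" where
  "irreducible_chain Q \<longleftrightarrow> (\<forall>s s'. \<exists>n>0. nstep Q n s s' > 0)"

definition aperiodic_chain :: "('s::finite \<Rightarrow> 's \<Rightarrow> real) \<Rightarrow> bool" where
  "aperiodic_chain Q \<longleftrightarrow> (\<forall>s. Gcd {n. n > 0 \<and> nstep Q n s s > 0} = 1)"

definition ergodic_chain :: "('s::finite \<Rightarrow> 's \<Rightarrow> real) \<Rightarrow> bool" where
  "ergodic_chain Q \<longleftrightarrow> irreducible_chain Q \<and> aperiodic_chain Q"

definition is_stationary :: "('s::finite \<Rightarrow> 's \<Rightarrow> real) \<Rightarrow> ('s \<Rightarrow> real) \<Rightarrow> bool" where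
  "is_stationary Q p \<longleftrightarrow> (\<forall>s. p s \<ge> 0) \<and> (\<Sum>s\<in>UNIV. p s) = 1 \<and>
      (\<forall>s'. (\<Sum>s\<in>UNIV. p s * Q s s') = p s')"

(* the (unique, for ergodic chains) stationary distribution pi^mu *)
definition stat_dist :: "('i::finite \<Rightarrow> 'b set) \<Rightarrow> ('s::finite \<Rightarrow> ('i \<Rightarrow> 'b) \<Rightarrow> 's \<Rightarrow> real)
     \<Rightarrow> ('i \<Rightarrow> 's \<Rightarrow> 'b \<Rightarrow> real) \<Rightarrow> 's \<Rightarrow> real" where
  "stat_dist A P mu = (THE p. is_stationary (Pmu A P mu) p)"

definition eta :: "('i::finite \<Rightarrow> 'b set) \<Rightarrow> ('s::finite \<Rightarrow> ('i \<Rightarrow> 'b) \<Rightarrow> 's \<Rightarrow> real)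
     \<Rightarrow> ('s \<Rightarrow> ('i \<Rightarrow> 'b) \<Rightarrow> real) \<Rightarrow> ('i \<Rightarrow> 's \<Rightarrow> 'b \<Rightarrow> real) \<Rightarrow> real" where
  "eta A P r mu = (\<Sum>s\<in>UNIV. stat_dist A P mu s *
       (\<Sum>a\<in>joint_actions A. jprob mu s a * r s a))"

definition zeta :: "('i::finite \<Rightarrow> 'b set) \<Rightarrow> ('s::finite \<Rightarrow> ('i \<Rightarrow> 'b) \<Rightarrow> 's \<Rightarrow> real)
     \<Rightarrow> ('s \<Rightarrow> ('i \<Rightarrow> 'b) \<Rightarrow> real) \<Rightarrow> ('i \<Rightarrow> 's \<Rightarrow> 'b \<Rightarrow> real) \<Rightarrow> real" where
  "zeta A P r mu = (\<Sum>s\<in>UNIV. stat_dist A P mu s *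
       (\<Sum>a\<in>joint_actions A. jprob mu s a * (r s a - eta A P r mu)\<^sup>2))"

definition Jmv :: "real \<Rightarrow> ('i::finite \<Rightarrow> 'b set) \<Rightarrow> ('s::finite \<Rightarrow> ('i \<Rightarrow> 'b) \<Rightarrow> 's \<Rightarrow> real)
     \<Rightarrow> ('s \<Rightarrow> ('i \<Rightarrow> 'b) \<Rightarrow> real) \<Rightarrow> ('i \<Rightarrow> 's \<Rightarrow> 'b \<Rightarrow> real) \<Rightarrow> real" where
  "Jmv \<beta> A P r mu = eta A P r mu - \<beta> * zeta A P r mu"

definition fsur :: "real \<Rightarrow> ('i::finite \<Rightarrow> 'b set) \<Rightarrow> ('s::finite \<Rightarrow> ('i \<Rightarrow> 'b) \<Rightarrow> 's \<Rightarrow> real)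
     \<Rightarrow> ('s \<Rightarrow> ('i \<Rightarrow> 'b) \<Rightarrow> real) \<Rightarrow> ('i \<Rightarrow> 's \<Rightarrow> 'b \<Rightarrow> real) \<Rightarrow> 's \<Rightarrow> ('i \<Rightarrow> 'b) \<Rightarrow> real" where
  "fsur \<beta> A P r mu s a = r s a - \<beta> * (r s a - eta A P r mu)\<^sup>2"

definition fsur_s :: "real \<Rightarrow> ('i::finite \<Rightarrow> 'b set) \<Rightarrow> ('s::finite \<Rightarrow> ('i \<Rightarrow> 'b) \<Rightarrow> 's \<Rightarrow> real)
     \<Rightarrow> ('s \<Rightarrow> ('i \<Rightarrow> 'b) \<Rightarrow> real) \<Rightarrow> ('i \<Rightarrow> 's \<Rightarrow> 'b \<Rightarrow> real) \<Rightarrow> 's \<Rightarrow> real" where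
  "fsur_s \<beta> A P r mu s = (\<Sum>a\<in>joint_actions A. jprob mu s a * fsur \<beta> A P r mu s a)"

definition poisson_solution :: "real \<Rightarrow> ('i::finite \<Rightarrow> 'b set) \<Rightarrow> ('s::finite \<Rightarrow> ('i \<Rightarrow> 'b) \<Rightarrow> 's \<Rightarrow> real)
     \<Rightarrow> ('s \<Rightarrow> ('i \<Rightarrow> 'b) \<Rightarrow> real) \<Rightarrow> ('i \<Rightarrow> 's \<Rightarrow> 'b \<Rightarrow> real) \<Rightarrow> ('s \<Rightarrow> real) \<Rightarrow> bool" where
  "poisson_solution \<beta> A P r mu V \<longleftrightarrow> (\<forall>s. V s = fsur_s \<beta> A P r mu s - Jmv \<beta> A P r mu
      + (\<Sum>s'\<in>UNIV. Pmu A P mu s s' * V s'))"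

definition Qf :: "real \<Rightarrow> ('i::finite \<Rightarrow> 'b set) \<Rightarrow> ('s::finite \<Rightarrow> ('i \<Rightarrow> 'b) \<Rightarrow> 's \<Rightarrow> real)
     \<Rightarrow> ('s \<Rightarrow> ('i \<Rightarrow> 'b) \<Rightarrow> real) \<Rightarrow> ('i \<Rightarrow> 's \<Rightarrow> 'b \<Rightarrow> real) \<Rightarrow> ('s \<Rightarrow> real)
     \<Rightarrow> 's \<Rightarrow> ('i \<Rightarrow> 'b) \<Rightarrow> real" where
  "Qf \<beta> A P r mu V s a = fsur \<beta> A P r mu s a - Jmv \<beta> A P r mu + (\<Sum>s'\<in>UNIV. P s a s' * V s')"

definition Af :: "real \<Rightarrow> ('i::finite \<Rightarrow> 'b set) \<Rightarrow> ('s::finite \<Rightarrow> ('i \<Rightarrow> 'b) \<Rightarrow> 's \<Rightarrow> real)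
     \<Rightarrow> ('s \<Rightarrow> ('i \<Rightarrow> 'b) \<Rightarrow> real) \<Rightarrow> ('i \<Rightarrow> 's \<Rightarrow> 'b \<Rightarrow> real) \<Rightarrow> ('s \<Rightarrow> real)
     \<Rightarrow> 's \<Rightarrow> ('i \<Rightarrow> 'b) \<Rightarrow> real" where
  "Af \<beta> A P r mu V s a = Qf \<beta> A P r mu V s a - V s"

end

theory Submission
  imports Defs
begin

(* Write E' for the expectation over s ~ pi^mu', a ~ mu'(.|s). Since pi^mu' is invariant for
   P^mu', the transition term of the advantage averages out against V.
   Expanding f^mu gives E'[f^mu] = eta^mu' - beta E'[(r - eta^mu)^2], and the bias-variance split
   E'[(r - eta^mu)^2] = zeta^mu' + (eta^mu' - eta^mu)^2 yields the formula.
   That stat_dist, a definite description, is stationary needs an argument: P - I kills the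
   constant vector, so some nonzero u has u P = u; then |u| P = |u| because P preserves mass,
   and irreducibility makes the stationary distribution unique. *)

definition stochastic_matrix :: "('s::finite \<Rightarrow> 's \<Rightarrow> real) \<Rightarrow> bool" where
  "stochastic_matrix Q \<longleftrightarrow> (\<forall>s s'. Q s s' \<ge> 0) \<and> (\<forall>s. (\<Sum>s'\<in>UNIV. Q s s') = 1)"

definition invariant_vector :: "('s::finite \<Rightarrow> 's \<Rightarrow> real) \<Rightarrow> ('s \<Rightarrow> real) \<Rightarrow> bool" where
  "invariant_vector Q u \<longleftrightarrow> (\<forall>s'. (\<Sum>s\<in>UNIV. u s * Q s s') = u s')"

lemma is_stationary_iff_invariant:
  "is_stationary Q p \<longleftrightarrow> (\<forall>s. p s \<ge> 0) \<and> (\<Sum>s\<in>UNIV. p s) = 1 \<and> invariant_vector Q p"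
  by (simp add: is_stationary_def invariant_vector_def)

lemma invariant_vector_exists:
  fixes Q :: "'s::finite \<Rightarrow> 's \<Rightarrow> real"
  assumes rows: "\<And>s. (\<Sum>s'\<in>UNIV. Q s s') = 1"
  shows "\<exists>u. u \<noteq> (\<lambda>_. 0) \<and> invariant_vector Q u"
proof -
  define N :: "real^'s^'s" where "N = (\<chi> i j. Q i j - of_bool (i = j))"
  have "N *v (\<chi> j. 1) = 0"
    by (simp add: N_def vec_eq_iff matrix_vector_mult_def sum_subtractf rows)
  then have "\<not> invertible N"
    by (metis invertible_left_inverse matrix_left_invertible_ker one_neq_zero vec_lambda_beta zero_index)
  then have "\<not> invertible (transpose N)"
    by (simp add: invertible_det_nz det_transpose)
  then obtain x where x: "transpose N *v x = 0" "x \<noteq> 0"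
    by (metis invertible_left_inverse matrix_left_invertible_ker)
  have "(\<Sum>s\<in>UNIV. x $ s * Q s s') = x $ s'" for s'
  proof -
    have "(transpose N *v x) $ s' = (\<Sum>s\<in>UNIV. Q s s' * x $ s - of_bool (s = s') * x $ s)"
      by (simp add: N_def transpose_def matrix_vector_mult_def left_diff_distrib)
    also have "\<dots> = (\<Sum>s\<in>UNIV. x $ s * Q s s') - x $ s'"
      by (simp add: sum_subtractf mult.commute)
    finally show ?thesis using x(1) by simp
  qed
  moreover have "(\<lambda>s. x $ s) \<noteq> (\<lambda>_. 0)"
    using x(2) by (simp add: vec_eq_iff fun_eq_iff)
  ultimately show ?thesis
    unfolding invariant_vector_def by blast
qed

lemma nstep_nonneg:
  assumes "\<And>s s'. Q s s' \<ge> 0"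
  shows "nstep Q n s s' \<ge> 0"
  by (induction n arbitrary: s') (auto intro!: sum_nonneg mult_nonneg_nonneg assms)

lemma invariant_vector_nstep:
  assumes "invariant_vector Q u"
  shows "(\<Sum>s\<in>UNIV. u s * nstep Q n s s') = u s'"
proof (induction n arbitrary: s')
  case 0
  show ?case by (simp add: if_distrib cong: if_cong)
next
  case (Suc n)
  have "(\<Sum>s\<in>UNIV. u s * nstep Q (Suc n) s s')
      = (\<Sum>s\<in>UNIV. \<Sum>t\<in>UNIV. u s * nstep Q n s t * Q t s')"
    by (simp add: sum_distrib_left mult.assoc)
  also have "\<dots> = (\<Sum>t\<in>UNIV. (\<Sum>s\<in>UNIV. u s * nstep Q n s t) * Q t s')"
    by (subst sum.swap) (simp add: sum_distrib_right)
  also have "\<dots> = u s'"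
    using Suc assms by (simp add: invariant_vector_def)
  finally show ?case .
qed

lemma invariant_vector_abs:
  assumes Q: "stochastic_matrix Q" and u: "invariant_vector Q u"
  shows "invariant_vector Q (\<lambda>s. \<bar>u s\<bar>)"
proof -
  let ?v = "\<lambda>t. \<Sum>s\<in>UNIV. \<bar>u s\<bar> * Q s t"
  have le: "\<bar>u t\<bar> \<le> ?v t" for t
  proof -
    have "\<bar>u t\<bar> = \<bar>\<Sum>s\<in>UNIV. u s * Q s t\<bar>"
      using u by (simp add: invariant_vector_def)
    also have "\<dots> \<le> (\<Sum>s\<in>UNIV. \<bar>u s * Q s t\<bar>)"
      by (rule sum_abs)
    also have "\<dots> = ?v t"
      using Q by (simp add: stochastic_matrix_def abs_mult)
    finally show ?thesis .
  qed
  \<comment> \<open>Q preserves total mass, so the inequality cannot be strict anywhere.\<close>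
  have "(\<Sum>t\<in>UNIV. ?v t) = (\<Sum>t\<in>UNIV. \<bar>u t\<bar>)"
    using Q by (subst sum.swap) (simp add: stochastic_matrix_def flip: sum_distrib_left)
  then have "(\<Sum>t\<in>UNIV. ?v t - \<bar>u t\<bar>) = 0"
    by (simp add: sum_subtractf)
  then have "\<forall>t\<in>UNIV. ?v t - \<bar>u t\<bar> = 0"
    using le by (subst (asm) sum_nonneg_eq_0_iff) auto
  then show ?thesis
    by (simp add: invariant_vector_def)
qed

lemma invariant_vector_nonneg_vanishes:
  assumes Q: "stochastic_matrix Q" and irr: "irreducible_chain Q"
    and nonneg: "\<And>s. u s \<ge> 0" and u: "invariant_vector Q u" and zero: "u s0 = 0"
  shows "u s = 0"
proof -
  obtain n where n: "nstep Q n s s0 > 0"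
    using irr unfolding irreducible_chain_def by blast
  have "(\<Sum>t\<in>UNIV. u t * nstep Q n t s0) = 0"
    using invariant_vector_nstep[OF u] zero by simp
  moreover have "u t * nstep Q n t s0 \<ge> 0" for t
    using Q nonneg by (auto intro!: mult_nonneg_nonneg nstep_nonneg simp: stochastic_matrix_def)
  ultimately have "u s * nstep Q n s s0 = 0"
    by (simp add: sum_nonneg_eq_0_iff)
  with n show ?thesis by simp
qed

lemma invariant_vector_sum_zero:
  assumes Q: "stochastic_matrix Q" and irr: "irreducible_chain Q"
    and d: "invariant_vector Q d" and sum0: "(\<Sum>s\<in>UNIV. d s) = 0"
  shows "d = (\<lambda>_. 0)"
proof -
  define u where "u s = d s + \<bar>d s\<bar>" for s
  have u: "invariant_vector Q u"
    using d invariant_vector_abs[OF Q d] unfolding invariant_vector_def u_def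
    by (simp add: distrib_right sum.distrib)
  have u_nonneg: "u s \<ge> 0" for s
    by (simp add: u_def)
  consider "\<forall>s. d s \<ge> 0" | "\<forall>s. d s \<le> 0"
  proof (cases "\<exists>s0. d s0 < 0")
    case True
    then obtain s0 where "d s0 < 0" ..
    then have "u s0 = 0"
      by (simp add: u_def)
    have "d s \<le> 0" for s
    proof -
      have "u s = 0"
        by (rule invariant_vector_nonneg_vanishes[OF Q irr u_nonneg u \<open>u s0 = 0\<close>])
      then show ?thesis
        unfolding u_def by linarith
    qed
    then show ?thesis
      using that(2) by blast
  qed (auto simp: not_less)
  then show ?thesis
  proof cases
    case 1
    then show ?thesis
      using sum0 sum_nonneg_eq_0_iff[of UNIV d] by (simp add: fun_eq_iff)
  next
    case 2
    then show ?thesis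
      using sum0 sum_nonneg_eq_0_iff[of UNIV "\<lambda>s. - d s"] by (simp add: fun_eq_iff sum_negf)
  qed
qed

lemma stationary_exists:
  assumes Q: "stochastic_matrix Q"
  shows "\<exists>p. is_stationary Q p"
proof -
  obtain u where "u \<noteq> (\<lambda>_. 0)" and u: "invariant_vector Q u"
    using invariant_vector_exists Q unfolding stochastic_matrix_def by blast
  then obtain s1 where "u s1 \<noteq> 0" by auto
  define c where "c = (\<Sum>s\<in>UNIV. \<bar>u s\<bar>)"
  have "\<bar>u s1\<bar> \<le> c"
    unfolding c_def by (rule member_le_sum) auto
  with \<open>u s1 \<noteq> 0\<close> have "c > 0" by simp
  have "is_stationary Q (\<lambda>s. \<bar>u s\<bar> / c)"
    using invariant_vector_abs[OF Q u] \<open>c > 0\<close>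
    by (simp add: is_stationary_iff_invariant invariant_vector_def c_def
        flip: sum_divide_distrib)
  then show ?thesis by blast
qed

lemma stationary_unique:
  assumes Q: "stochastic_matrix Q" and irr: "irreducible_chain Q"
    and p: "is_stationary Q p" and q: "is_stationary Q q"
  shows "p = q"
proof -
  have "invariant_vector Q (\<lambda>s. p s - q s)"
    using p q by (simp add: is_stationary_iff_invariant invariant_vector_def left_diff_distrib sum_subtractf)
  moreover have "(\<Sum>s\<in>UNIV. p s - q s) = 0"
    using p q by (simp add: is_stationary_def sum_subtractf)
  ultimately have "(\<lambda>s. p s - q s) = (\<lambda>_. 0)"
    by (rule invariant_vector_sum_zero[OF Q irr])
  then show ?thesis
    by (simp add: fun_eq_iff)
qed

lemma ex1_stationary:
  assumes "stochastic_matrix Q" and "irreducible_chain Q"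
  shows "\<exists>!p. is_stationary Q p"
  using stationary_exists stationary_unique assms by blast

lemma jprob_nonneg:
  assumes "is_joint_policy A mu"
  shows "jprob mu s a \<ge> 0"
  using assms by (auto simp: jprob_def is_joint_policy_def is_policy_def intro!: prod_nonneg)

lemma sum_jprob:
  assumes "\<And>i. finite (A i)" and "is_joint_policy A mu"
  shows "(\<Sum>a\<in>joint_actions A. jprob mu s a) = 1"
proof -
  have "(\<Sum>a\<in>joint_actions A. jprob mu s a) = (\<Prod>i\<in>UNIV. \<Sum>b\<in>A i. mu i s b)"
    unfolding jprob_def joint_actions_def using assms(1) by (simp add: prod_sum_PiE)
  also have "\<dots> = 1"
    using assms(2) by (simp add: is_joint_policy_def is_policy_def)
  finally show ?thesis .
qed

lemma stochastic_matrix_Pmu: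
  assumes game: "valid_game A P" and pol: "is_joint_policy A mu"
  shows "stochastic_matrix (Pmu A P mu)"
proof -
  have fin: "\<And>i. finite (A i)"
    using game by (simp add: valid_game_def)
  have "(\<Sum>s'\<in>UNIV. Pmu A P mu s s') = 1" for s
  proof -
    have "(\<Sum>s'\<in>UNIV. Pmu A P mu s s')
        = (\<Sum>a\<in>joint_actions A. jprob mu s a * (\<Sum>s'\<in>UNIV. P s a s'))"
      unfolding Pmu_def by (subst sum.swap) (simp add: sum_distrib_left)
    also have "\<dots> = (\<Sum>a\<in>joint_actions A. jprob mu s a)"
      using game by (simp add: valid_game_def)
    finally show ?thesis
      using sum_jprob[OF fin pol] by simp
  qed
  moreover have "Pmu A P mu s s' \<ge> 0" for s s'
    using game jprob_nonneg[OF pol]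
    by (auto simp: Pmu_def valid_game_def intro!: sum_nonneg mult_nonneg_nonneg)
  ultimately show ?thesis
    by (simp add: stochastic_matrix_def)
qed

lemma stat_dist_stationary:
  assumes "valid_game A P" and "is_joint_policy A mu" and "irreducible_chain (Pmu A P mu)"
  shows "is_stationary (Pmu A P mu) (stat_dist A P mu)"
  unfolding stat_dist_def
  using ex1_stationary[OF stochastic_matrix_Pmu[OF assms(1,2)] assms(3)] by (rule theI')

definition stationary_mean ::
  "('i::finite \<Rightarrow> 'b set) \<Rightarrow> ('s::finite \<Rightarrow> ('i \<Rightarrow> 'b) \<Rightarrow> 's \<Rightarrow> real)
     \<Rightarrow> ('i \<Rightarrow> 's \<Rightarrow> 'b \<Rightarrow> real) \<Rightarrow> ('s \<Rightarrow> ('i \<Rightarrow> 'b) \<Rightarrow> real) \<Rightarrow> real" where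
  "stationary_mean A P mu g =
     (\<Sum>s\<in>UNIV. stat_dist A P mu s * (\<Sum>a\<in>joint_actions A. jprob mu s a * g s a))"

lemma eta_eq_stationary_mean: "eta A P r mu = stationary_mean A P mu r"
  by (simp add: eta_def stationary_mean_def)

lemma zeta_eq_stationary_mean:
  "zeta A P r mu = stationary_mean A P mu (\<lambda>s a. (r s a - eta A P r mu)\<^sup>2)"
  by (simp add: zeta_def stationary_mean_def)

lemma stationary_mean_add:
  "stationary_mean A P mu (\<lambda>s a. g s a + h s a) = stationary_mean A P mu g + stationary_mean A P mu h"
  by (simp add: stationary_mean_def distrib_left sum.distrib)

lemma stationary_mean_diff:
  "stationary_mean A P mu (\<lambda>s a. g s a - h s a) = stationary_mean A P mu g - stationary_mean A P mu h"
  by (simp add: stationary_mean_def right_diff_distrib sum_subtractf)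

lemma stationary_mean_cmult:
  "stationary_mean A P mu (\<lambda>s a. c * g s a) = c * stationary_mean A P mu g"
  by (simp add: stationary_mean_def sum_distrib_left mult.left_commute)

lemma stationary_mean_state_fun:
  assumes "\<And>i. finite (A i)" and "is_joint_policy A mu"
  shows "stationary_mean A P mu (\<lambda>s a. h s) = (\<Sum>s\<in>UNIV. stat_dist A P mu s * h s)"
  using sum_jprob[OF assms] by (simp add: stationary_mean_def mult.commute flip: sum_distrib_left)

lemma stationary_mean_const:
  assumes "valid_game A P" and "is_joint_policy A mu" and "irreducible_chain (Pmu A P mu)"
  shows "stationary_mean A P mu (\<lambda>s a. c) = c"
proof -
  have "(\<Sum>s\<in>UNIV. stat_dist A P mu s) = 1"
    using stat_dist_stationary[OF assms] by (simp add: is_stationary_def)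
  then show ?thesis
    using assms(1,2) by (simp add: stationary_mean_state_fun valid_game_def flip: sum_distrib_right)
qed

lemma stationary_mean_square_dev:
  fixes g :: "'s::finite \<Rightarrow> ('i::finite \<Rightarrow> 'b) \<Rightarrow> real"
  assumes "valid_game A P" and "is_joint_policy A mu" and "irreducible_chain (Pmu A P mu)"
  defines "m \<equiv> stationary_mean A P mu g"
  shows "stationary_mean A P mu (\<lambda>s a. (g s a - c)\<^sup>2)
           = stationary_mean A P mu (\<lambda>s a. (g s a - m)\<^sup>2) + (m - c)\<^sup>2"
proof -
  have expand: "(g s a - c)\<^sup>2 = (g s a - m)\<^sup>2 + (2 * (m - c) * g s a + (c\<^sup>2 - m\<^sup>2))" for s a
    by (simp add: power2_eq_square algebra_simps)
  have "stationary_mean A P mu (\<lambda>s a. (g s a - c)\<^sup>2)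
      = stationary_mean A P mu (\<lambda>s a. (g s a - m)\<^sup>2) + (2 * (m - c) * m + (c\<^sup>2 - m\<^sup>2))"
    by (simp only: expand stationary_mean_add stationary_mean_cmult
        stationary_mean_const[OF assms(1-3)] flip: m_def)
  also have "\<dots> = stationary_mean A P mu (\<lambda>s a. (g s a - m)\<^sup>2) + (m - c)\<^sup>2"
    by (simp add: power2_eq_square algebra_simps)
  finally show ?thesis .
qed

lemma stationary_mean_successor:
  assumes "valid_game A P" and "is_joint_policy A mu" and "irreducible_chain (Pmu A P mu)"
  shows "stationary_mean A P mu (\<lambda>s a. \<Sum>s'\<in>UNIV. P s a s' * V s')
           = stationary_mean A P mu (\<lambda>s a. V s)"
proof -
  let ?\<pi> = "stat_dist A P mu"
  have step: "(\<Sum>a\<in>joint_actions A. jprob mu s a * (\<Sum>s'\<in>UNIV. P s a s' * V s'))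
      = (\<Sum>s'\<in>UNIV. Pmu A P mu s s' * V s')" for s
    unfolding Pmu_def sum_distrib_left sum_distrib_right
    by (subst sum.swap) (simp add: mult.assoc)
  have "stationary_mean A P mu (\<lambda>s a. \<Sum>s'\<in>UNIV. P s a s' * V s')
      = (\<Sum>s\<in>UNIV. ?\<pi> s * (\<Sum>s'\<in>UNIV. Pmu A P mu s s' * V s'))"
    by (simp add: stationary_mean_def step)
  also have "\<dots> = (\<Sum>s'\<in>UNIV. (\<Sum>s\<in>UNIV. ?\<pi> s * Pmu A P mu s s') * V s')"
    unfolding sum_distrib_left sum_distrib_right by (subst sum.swap) (simp add: mult.assoc)
  also have "\<dots> = (\<Sum>s\<in>UNIV. ?\<pi> s * V s)"
    using stat_dist_stationary[OF assms] by (simp add: is_stationary_def)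
  also have "\<dots> = stationary_mean A P mu (\<lambda>s a. V s)"
    using assms(1,2) by (simp add: stationary_mean_state_fun valid_game_def)
  finally show ?thesis .
qed

lemma stationary_mean_fsur:
  assumes "valid_game A P" and "is_joint_policy A mu'" and "irreducible_chain (Pmu A P mu')"
  shows "stationary_mean A P mu' (fsur \<beta> A P r mu)
           = eta A P r mu' - \<beta> * (zeta A P r mu' + (eta A P r mu' - eta A P r mu)\<^sup>2)"
proof -
  have "stationary_mean A P mu' (fsur \<beta> A P r mu)
      = eta A P r mu' - \<beta> * stationary_mean A P mu' (\<lambda>s a. (r s a - eta A P r mu)\<^sup>2)"
    by (simp add: fsur_def[abs_def] stationary_mean_diff stationary_mean_cmult eta_eq_stationary_mean)
  also have "stationary_mean A P mu' (\<lambda>s a. (r s a - eta A P r mu)\<^sup>2)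
      = zeta A P r mu' + (eta A P r mu' - eta A P r mu)\<^sup>2"
    using stationary_mean_square_dev[OF assms, of r "eta A P r mu"]
    by (simp add: zeta_eq_stationary_mean eta_eq_stationary_mean)
  finally show ?thesis .
qed

lemma stationary_mean_Af:
  assumes "valid_game A P" and "is_joint_policy A mu'" and "irreducible_chain (Pmu A P mu')"
  shows "stationary_mean A P mu' (Af \<beta> A P r mu V)
           = stationary_mean A P mu' (fsur \<beta> A P r mu) - Jmv \<beta> A P r mu"
proof -
  have "Af \<beta> A P r mu V = (\<lambda>s a. (fsur \<beta> A P r mu s a - Jmv \<beta> A P r mu)
                                  + (\<Sum>s'\<in>UNIV. P s a s' * V s') - V s)"
    by (simp add: fun_eq_iff Af_def Qf_def)
  then show ?thesis
    by (simp add: stationary_mean_add stationary_mean_diff stationary_mean_const[OF assms]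
        stationary_mean_successor[OF assms])
qed

theorem lemma1:
  fixes A :: "'i::finite \<Rightarrow> 'b set"
    and P :: "'s::finite \<Rightarrow> ('i \<Rightarrow> 'b) \<Rightarrow> 's \<Rightarrow> real"
    and r :: "'s \<Rightarrow> ('i \<Rightarrow> 'b) \<Rightarrow> real"
    and \<beta> :: real
    and mu mu' :: "'i \<Rightarrow> 's \<Rightarrow> 'b \<Rightarrow> real"
    and V :: "'s \<Rightarrow> real"
  assumes game: "valid_game A P"
    and ergodic: "\<forall>nu. is_joint_policy A nu \<longrightarrow> ergodic_chain (Pmu A P nu)"
    and beta: "\<beta> \<ge> 0"
    and pol: "is_joint_policy A mu"
    and pol': "is_joint_policy A mu'"
    and V: "poisson_solution \<beta> A P r mu V"
  shows "Jmv \<beta> A P r mu' - Jmv \<beta> A P r mu =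
           (\<Sum>s\<in>UNIV. stat_dist A P mu' s *
              (\<Sum>a\<in>joint_actions A. jprob mu' s a * Af \<beta> A P r mu V s a))
           + \<beta> * (eta A P r mu' - eta A P r mu)\<^sup>2"
proof -
  have irr': "irreducible_chain (Pmu A P mu')"
    using ergodic pol' by (simp add: ergodic_chain_def)
  have "(\<Sum>s\<in>UNIV. stat_dist A P mu' s *
          (\<Sum>a\<in>joint_actions A. jprob mu' s a * Af \<beta> A P r mu V s a))
      = stationary_mean A P mu' (Af \<beta> A P r mu V)"
    by (simp add: stationary_mean_def)
  also have "\<dots> = eta A P r mu' - \<beta> * (zeta A P r mu' + (eta A P r mu' - eta A P r mu)\<^sup>2)
                  - Jmv \<beta> A P r mu"
    by (simp add: stationary_mean_Af stationary_mean_fsur game pol' irr')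
  finally show ?thesis
    by (simp add: Jmv_def algebra_simps)
qed

end
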